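(* Let $\mathbf I\subset\mathbb R$ be a bounded interval, $\sigma\in(0,1]$, and $\mathcal Q$ a collection of real-valued measurable functions on $\mathbf I$. Let $L:L^2(\mathbf I)\to\mathbb C$ be a bounded sub-linear functional, let $\mathbf S_\sigma$ be the set of all $f\in L^2(\mathbf I)$ that are $\sigma$-uniform in $\mathcal Q$, and set $$U_\sigma=\sup_{f\in\mathbf S_\sigma,\,f\ne0}\frac{|L(f)|}{\|f\|_{L^2(\mathbf I)}},\qquad Q=\sup_{q\in\mathcal Q}|L(e^{iq})|.$$ Then for all $f\in L^2(\mathbf I)$, $$|L(f)|\le\max\{U_\sigma,\,2\sigma^{-1}Q\}\,\|f\|_{L^2(\mathbf I)}.$$
   Context: A function $f\in L^2(\mathbf I)$ is $\sigma$-uniform in $\mathcal Q$ if $\big|\int_{\mathbf I}f(\xi)e^{-iq(\xi)}d\xi\big|\le\sigma\|f\|_{L^2(\mathbf I)}$ for all $q\in\mathcal Q$; otherwise it is $\sigma$-nonuniform. Sub-linear means $|L(f+g)|\le|L(f)|+|L(g)|$ and $|L(cf)|=|c||L(f)|$ for all $f,g\in L^2(\mathbf I)$, $c\in\mathbb C$; bounded means $|L(f)|\le A\|f\|_{L^2(\mathbf I)}$ for some $A<\infty$. Here $e^{iq}$ denotes the function $\xi\mapsto e^{iq(\xi)}$ on $\mathbf I$. *)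

theory Defs
  imports "HOL-Analysis.Analysis"
begin

text \<open>L^2(I): complex-valued Lebesgue measurable functions on I (represented as
functions on the reals; values outside I are irrelevant) with square-integrable modulus.\<close>
definition L2 :: "real set \<Rightarrow> (real \<Rightarrow> complex) set" where
  "L2 I = {f. f \<in> borel_measurable (lebesgue_on I) \<and>
               integrable (lebesgue_on I) (\<lambda>x. (cmod (f x))\<^sup>2)}"

definition L2norm :: "real set \<Rightarrow> (real \<Rightarrow> complex) \<Rightarrow> real" where
  "L2norm I f = sqrt (LINT x|lebesgue_on I. (cmod (f x))\<^sup>2)"

definition expi :: "(real \<Rightarrow> real) \<Rightarrow> real \<Rightarrow> complex" where
  "expi q = (\<lambda>\<xi>. exp (\<i> * complex_of_real (q \<xi>)))"

definition sigma_uniform ::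
  "real set \<Rightarrow> real \<Rightarrow> (real \<Rightarrow> real) set \<Rightarrow> (real \<Rightarrow> complex) \<Rightarrow> bool" where
  "sigma_uniform I \<sigma> \<Q> f \<longleftrightarrow>
     (\<forall>q\<in>\<Q>. cmod (LINT \<xi>|lebesgue_on I. f \<xi> * exp (- \<i> * complex_of_real (q \<xi>)))
              \<le> \<sigma> * L2norm I f)"

definition sublinear_on :: "(real \<Rightarrow> complex) set \<Rightarrow> ((real \<Rightarrow> complex) \<Rightarrow> complex) \<Rightarrow> bool" where
  "sublinear_on V L \<longleftrightarrow>
     (\<forall>f\<in>V. \<forall>g\<in>V. cmod (L (\<lambda>x. f x + g x)) \<le> cmod (L f) + cmod (L g)) \<and>
     (\<forall>f\<in>V. \<forall>c::complex. cmod (L (\<lambda>x. c * f x)) = cmod c * cmod (L f))"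

definition bounded_functional :: "real set \<Rightarrow> ((real \<Rightarrow> complex) \<Rightarrow> complex) \<Rightarrow> bool" where
  "bounded_functional I L \<longleftrightarrow> (\<exists>A::real. \<forall>f\<in>L2 I. cmod (L f) \<le> A * L2norm I f)"

end

theory Submission
  imports Defs
begin

(* Since L is bounded, its operator norm
     M = sup { |L g| / ||g|| : g in L^2(I), ||g|| <> 0 }
   is finite, and |L g| <= M ||g|| for all g.  Suppose M > K = max U (2 Q / sigma),
   so that eta = M sigma / 2 - Q > 0.  Every g of nonzero norm then satisfies
     |L g| / ||g|| <= max U (M - sigma eta / |I|):
   if g is sigma-uniform this is the definition of U; otherwise some q has
   |<g, e^{iq}>| > sigma ||g||, and splitting g = c e^{iq} + h, with h orthogonal to
   e^{iq}, gives |L g| <= |c| Q + M ||h|| together with the Pythagorean identity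
   ||h||^2 = ||g||^2 - |<g,e^{iq}>|^2 / |I|; an elementary estimate turns this into
   the drop by sigma eta / |I|.  Taking the supremum yields M < M, so M <= K. *)

lemma L2norm_nonneg: "0 \<le> L2norm I f"
  unfolding L2norm_def by (simp add: integral_nonneg)

lemma L2norm_square: "(L2norm I f)\<^sup>2 = (LINT x|lebesgue_on I. (cmod (f x))\<^sup>2)"
  unfolding L2norm_def by (simp add: integral_nonneg)

lemma L2_scale:
  assumes "g \<in> L2 I"
  shows "(\<lambda>x. c * g x) \<in> L2 I"
proof -
  have "g \<in> borel_measurable (lebesgue_on I)"
    using assms unfolding L2_def by simp
  then have "(\<lambda>x. c * g x) \<in> borel_measurable (lebesgue_on I)"
    by measurable
  moreover have "integrable (lebesgue_on I) (\<lambda>x. (cmod c)\<^sup>2 * (cmod (g x))\<^sup>2)"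
    using assms unfolding L2_def by (intro integrable_mult_right) auto
  ultimately show ?thesis
    unfolding L2_def by (simp add: norm_mult power_mult_distrib)
qed

lemma norm_expi [simp]: "cmod (expi q x) = 1"
  by (simp add: expi_def)

lemma expi_measurable:
  assumes "q \<in> borel_measurable M"
  shows "expi q \<in> borel_measurable M"
  unfolding expi_def using assms by measurable

lemma expi_in_L2:
  assumes "I \<in> lmeasurable" and "q \<in> borel_measurable (lebesgue_on I)"
  shows "expi q \<in> L2 I"
  using expi_measurable[OF assms(2)] finite_measure.integrable_const[OF finite_measure_lebesgue_on[OF assms(1)]]
  unfolding L2_def by simp

lemma L2norm_expi:
  assumes "I \<in> sets lebesgue"
  shows "L2norm I (expi q) = sqrt (measure lebesgue I)"
  using assms by (simp add: L2norm_def measure_restrict_space)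

text \<open>The integral in the definition of uniformity is the inner product with \<open>e^{iq}\<close>.\<close>
lemma exp_minus_eq_cnj_expi: "exp (- \<i> * complex_of_real (q x)) = cnj (expi q x)"
  by (simp add: expi_def exp_cnj)

lemma measure_pos_of_L2norm_pos:
  assumes I: "I \<in> lmeasurable" and g_pos: "L2norm I g > 0"
  shows "measure lebesgue I > 0"
proof (rule ccontr)
  assume "\<not> measure lebesgue I > 0"
  then have "measure lebesgue I = 0"
    using measure_nonneg[of lebesgue I] by linarith
  then have "emeasure lebesgue I = 0"
    using emeasure_eq_measure2[OF I] by simp
  then have "emeasure (lebesgue_on I) (space (lebesgue_on I)) = 0"
    using I by (simp add: emeasure_restrict_space fmeasurable_def)
  then have "space (lebesgue_on I) \<in> null_sets (lebesgue_on I)"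
    by (auto intro: null_setsI)
  then have "(LINT x|lebesgue_on I. (cmod (g x))\<^sup>2) = 0"
    by (intro integral_eq_zero_AE AE_I') auto
  then show False
    using L2norm_square[of I g] g_pos by simp
qed

section \<open>Orthogonal decomposition along a unimodular function\<close>

lemma borel_measurable_cnj [measurable]:
  assumes "f \<in> borel_measurable M"
  shows "(\<lambda>x. cnj (f x)) \<in> borel_measurable M"
  using measurable_compose[OF assms borel_measurable_continuous_onI[OF continuous_on_cnj[OF continuous_on_id]]]
  by simp

lemma norm_diff_square:
  fixes f c e :: complex
  shows "(cmod (f - c * e))\<^sup>2 = (cmod f)\<^sup>2 - 2 * Re (cnj c * (f * cnj e)) + (cmod c)\<^sup>2 * (cmod e)\<^sup>2"
  unfolding cmod_power2 by (simp add: power2_eq_square algebra_simps)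

lemma projection_remainder:
  fixes M :: "real measure" and f e :: "real \<Rightarrow> complex"
  assumes fin: "finite_measure M" and pos: "measure M (space M) > 0"
    and f_meas: "f \<in> borel_measurable M" and f_sq: "integrable M (\<lambda>x. (cmod (f x))\<^sup>2)"
    and e_meas: "e \<in> borel_measurable M" and e_unit: "\<And>x. x \<in> space M \<Longrightarrow> cmod (e x) = 1"
    and a_def: "a = (LINT x|M. f x * cnj (e x))"
    and c_def: "c = a / of_real (measure M (space M))"
  shows "(\<lambda>x. f x - c * e x) \<in> borel_measurable M"
    and "integrable M (\<lambda>x. (cmod (f x - c * e x))\<^sup>2)"
    and "(LINT x|M. (cmod (f x - c * e x))\<^sup>2)
           = (LINT x|M. (cmod (f x))\<^sup>2) - (cmod a)\<^sup>2 / measure M (space M)"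
proof -
  interpret finite_measure M by (rule fin)
  define m where "m = measure M (space M)"
  show "(\<lambda>x. f x - c * e x) \<in> borel_measurable M"
    using f_meas e_meas by measurable
  have inner_int: "integrable M (\<lambda>x. f x * cnj (e x))"
  proof (rule Bochner_Integration.integrable_bound[of M "\<lambda>x. 1 + (cmod (f x))\<^sup>2"])
    show "integrable M (\<lambda>x. 1 + (cmod (f x))\<^sup>2)"
      using f_sq by simp
    show "(\<lambda>x. f x * cnj (e x)) \<in> borel_measurable M"
      using f_meas e_meas by measurable
    have "cmod z \<le> 1 + (cmod z)\<^sup>2" for z :: complex
    proof -
      have "2 * cmod z \<le> (cmod z)\<^sup>2 + 1"
        using zero_le_power2[of "cmod z - 1"] by (simp add: power2_diff)
      then show ?thesis
        using norm_ge_zero[of z] by linarith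
    qed
    then show "AE x in M. norm (f x * cnj (e x)) \<le> norm (1 + (cmod (f x))\<^sup>2)"
      using e_unit by (intro AE_I2) (simp add: norm_mult)
  qed
  have re_int: "integrable M (\<lambda>x. Re (cnj c * (f x * cnj (e x))))"
    using inner_int by (intro integrable_Re integrable_mult_right)
  have pointwise: "(cmod (f x - c * e x))\<^sup>2
      = (cmod (f x))\<^sup>2 - 2 * Re (cnj c * (f x * cnj (e x))) + (cmod c)\<^sup>2" if "x \<in> space M" for x
    using norm_diff_square[of "f x" c "e x"] e_unit[OF that] by simp
  have expanded_int: "integrable M (\<lambda>x. (cmod (f x))\<^sup>2 - 2 * Re (cnj c * (f x * cnj (e x))) + (cmod c)\<^sup>2)"
    using f_sq re_int by (intro Bochner_Integration.integrable_add Bochner_Integration.integrable_diff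
        Bochner_Integration.integrable_mult_right integrable_const)
  show "integrable M (\<lambda>x. (cmod (f x - c * e x))\<^sup>2)"
    by (rule iffD1[OF Bochner_Integration.integrable_cong[OF refl] expanded_int]) (simp add: pointwise)
  have "(LINT x|M. (cmod (f x - c * e x))\<^sup>2)
      = (LINT x|M. (cmod (f x))\<^sup>2 - 2 * Re (cnj c * (f x * cnj (e x))) + (cmod c)\<^sup>2)"
    by (rule Bochner_Integration.integral_cong[OF refl pointwise])
  also have "\<dots> = (LINT x|M. (cmod (f x))\<^sup>2) - (LINT x|M. 2 * Re (cnj c * (f x * cnj (e x))))
                   + (LINT x|M. (cmod c)\<^sup>2)"
    using f_sq re_int
    by (simp only: Bochner_Integration.integral_add Bochner_Integration.integral_diff
        Bochner_Integration.integrable_diff Bochner_Integration.integrable_mult_right integrable_const)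
  also have "(LINT x|M. 2 * Re (cnj c * (f x * cnj (e x)))) = 2 * Re (cnj c * a)"
    using inner_int
    by (simp only: Bochner_Integration.integral_mult_right_zero Bochner_Integration.integral_Re
        Bochner_Integration.integrable_mult_right a_def)
  also have "(LINT x|M. (cmod c)\<^sup>2) = (cmod c)\<^sup>2 * m"
    by (simp add: m_def)
  also have "2 * Re (cnj c * a) = 2 * (cmod a)\<^sup>2 / m"
    using cmod_power2[of a] by (simp add: c_def m_def power2_eq_square field_simps)
  also have "(cmod c)\<^sup>2 * m = (cmod a)\<^sup>2 / m"
    using pos by (simp add: c_def m_def norm_divide power2_eq_square field_simps)
  finally show "(LINT x|M. (cmod (f x - c * e x))\<^sup>2)
      = (LINT x|M. (cmod (f x))\<^sup>2) - (cmod a)\<^sup>2 / measure M (space M)"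
    by (simp add: m_def)
qed

text \<open>Tangent-line bound for the square root at \<open>n\<^sup>2\<close>.\<close>
lemma sqrt_diff_le:
  fixes n y :: real
  assumes "0 < n" "0 \<le> y" "y \<le> n\<^sup>2"
  shows "sqrt (n\<^sup>2 - y) \<le> n - y / (2 * n)"
proof -
  have nonneg: "0 \<le> n - y / (2 * n)"
    using assms by (simp add: field_simps power2_eq_square)
  have "n\<^sup>2 - y \<le> (n - y / (2 * n))\<^sup>2"
    using assms by (simp add: field_simps power2_eq_square)
  then have "sqrt (n\<^sup>2 - y) \<le> sqrt ((n - y / (2 * n))\<^sup>2)"
    by (rule real_sqrt_le_mono)
  then show ?thesis
    using nonneg by simp
qed

text \<open>The arithmetic core of the drop estimate: with \<open>n = ||g||\<close>, \<open>s = |<g,e>| > \<sigma> n\<close>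
  and \<open>m = \<mu>(I)\<close>, the bound \<open>X \<le> (s/m) Q + M (n - s\<^sup>2/(2 m n))\<close> forces
  \<open>X / n \<le> M - \<sigma> (M \<sigma>/2 - Q) / m\<close>.\<close>
lemma drop_arithmetic:
  fixes X s n m M Q \<sigma> :: real
  assumes n: "n > 0" and m: "m > 0" and \<sigma>: "\<sigma> > 0" and s: "s > \<sigma> * n" and M: "M \<ge> 0"
    and gap: "M * \<sigma> / 2 - Q > 0"
    and X: "X \<le> s / m * Q + M * (n - (s\<^sup>2 / m) / (2 * n))"
  shows "X / n \<le> M - \<sigma> * (M * \<sigma> / 2 - Q) / m"
proof -
  have factor: "s * (M * s / (2 * n) - Q) - \<sigma> * n * (M * \<sigma> / 2 - Q)
      = (s - \<sigma> * n) * (M * (s + \<sigma> * n) / (2 * n) - Q)"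
    using n by (simp add: field_simps power2_eq_square)
  have "M * \<sigma> = M * (2 * \<sigma> * n) / (2 * n)"
    using n by simp
  also have "\<dots> \<le> M * (s + \<sigma> * n) / (2 * n)"
    using n s M by (intro divide_right_mono mult_left_mono) auto
  finally have "M * (s + \<sigma> * n) / (2 * n) - Q \<ge> 0"
    using gap mult_nonneg_nonneg[OF M less_imp_le[OF \<sigma>]] by linarith
  then have key: "s * (M * s / (2 * n) - Q) \<ge> \<sigma> * n * (M * \<sigma> / 2 - Q)"
    using factor s by (smt (verit) mult_nonneg_nonneg)
  have "X \<le> M * n - s * (M * s / (2 * n) - Q) / m"
    using X n m by (simp add: field_simps power2_eq_square)
  also have "\<dots> \<le> M * n - \<sigma> * n * (M * \<sigma> / 2 - Q) / m"
    using key m by (simp add: divide_right_mono)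
  finally have "X \<le> n * (M - \<sigma> * (M * \<sigma> / 2 - Q) / m)"
    by (simp add: algebra_simps)
  then show ?thesis
    using n by (simp add: divide_le_eq mult.commute)
qed

section \<open>The drop estimate for nonuniform functions\<close>

lemma nonuniform_ratio_drop:
  assumes I: "I \<in> lmeasurable" and q: "q \<in> borel_measurable (lebesgue_on I)"
    and sub: "sublinear_on (L2 I) L"
    and M: "0 \<le> M" and M_bound: "\<And>h. h \<in> L2 I \<Longrightarrow> cmod (L h) \<le> M * L2norm I h"
    and Q_bound: "cmod (L (expi q)) \<le> Q"
    and \<sigma>: "0 < \<sigma>" and gap: "M * \<sigma> / 2 - Q > 0"
    and g: "g \<in> L2 I" and g_pos: "L2norm I g > 0"
    and correlated: "cmod (LINT \<xi>|lebesgue_on I. g \<xi> * exp (- \<i> * complex_of_real (q \<xi>)))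
                       > \<sigma> * L2norm I g"
  shows "cmod (L g) / L2norm I g \<le> M - \<sigma> * (M * \<sigma> / 2 - Q) / measure lebesgue I"
proof -
  define N where "N = lebesgue_on I"
  define m where "m = measure lebesgue I"
  define n where "n = L2norm I g"
  define e where "e = expi q"
  define a where "a = (LINT x|N. g x * cnj (e x))"
  define c where "c = a / of_real m"
  define h where "h = (\<lambda>x. g x - c * e x)"
  have I_sets: "I \<in> sets lebesgue"
    using I by (simp add: fmeasurable_def)
  have fin: "finite_measure N"
    unfolding N_def using finite_measure_lebesgue_on[OF I] .
  have measure_N: "measure N I = m" and space_N: "space N = I"
    using I_sets by (simp_all add: N_def m_def measure_restrict_space)
  have m_pos: "m > 0"
    using measure_pos_of_L2norm_pos[OF I g_pos] by (simp add: m_def)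
  have "(\<lambda>\<xi>. g \<xi> * exp (- \<i> * complex_of_real (q \<xi>))) = (\<lambda>x. g x * cnj (e x))"
    by (simp only: exp_minus_eq_cnj_expi e_def)
  then have a_gt: "cmod a > \<sigma> * n"
    using correlated by (simp add: a_def N_def n_def)
  have g_L2: "g \<in> borel_measurable N" "integrable N (\<lambda>x. (cmod (g x))\<^sup>2)"
    using g by (auto simp: L2_def N_def)
  have e_L2: "e \<in> L2 I"
    unfolding e_def using expi_in_L2[OF I q] .
  note decomposition = projection_remainder[OF fin _ g_L2 _ _ a_def, of c]
  have h_L2: "h \<in> L2 I" and h_norm: "(L2norm I h)\<^sup>2 = n\<^sup>2 - (cmod a)\<^sup>2 / m"
    using decomposition m_pos expi_measurable[OF q] L2norm_square[of I]
    by (auto simp: L2_def h_def n_def e_def c_def measure_N space_N simp flip: N_def)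
  have "g = (\<lambda>x. c * e x + h x)"
    by (simp add: h_def)
  then have "cmod (L g) \<le> cmod (L (\<lambda>x. c * e x)) + cmod (L h)"
    using sub L2_scale[OF e_L2] h_L2 unfolding sublinear_on_def by simp
  also have "\<dots> = cmod c * cmod (L e) + cmod (L h)"
    using sub e_L2 unfolding sublinear_on_def by auto
  also have "\<dots> \<le> cmod c * Q + M * L2norm I h"
    using Q_bound M_bound[OF h_L2] unfolding e_def by (intro add_mono mult_left_mono) auto
  also have "L2norm I h \<le> n - ((cmod a)\<^sup>2 / m) / (2 * n)"
  proof -
    have "L2norm I h = sqrt (n\<^sup>2 - (cmod a)\<^sup>2 / m)"
      using h_norm L2norm_nonneg[of I h] by (metis real_sqrt_unique)
    moreover have "(cmod a)\<^sup>2 / m \<le> n\<^sup>2"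
      using h_norm zero_le_power2[of "L2norm I h"] by linarith
    ultimately show ?thesis
      using sqrt_diff_le[of n "(cmod a)\<^sup>2 / m"] g_pos m_pos by (simp add: n_def)
  qed
  finally have "cmod (L g) \<le> cmod a / m * Q + M * (n - ((cmod a)\<^sup>2 / m) / (2 * n))"
    using M m_pos by (simp add: c_def norm_divide mult_left_mono)
  then show ?thesis
    using drop_arithmetic[OF _ m_pos \<sigma> a_gt M gap] g_pos by (simp add: n_def m_def)
qed

definition ratio :: "real set \<Rightarrow> ((real \<Rightarrow> complex) \<Rightarrow> complex) \<Rightarrow> (real \<Rightarrow> complex) \<Rightarrow> real" where
  "ratio I L g = cmod (L g) / L2norm I g"

definition nonzero_L2 :: "real set \<Rightarrow> (real \<Rightarrow> complex) set" where
  "nonzero_L2 I = {g \<in> L2 I. L2norm I g \<noteq> 0}"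

definition opnorm :: "real set \<Rightarrow> ((real \<Rightarrow> complex) \<Rightarrow> complex) \<Rightarrow> real" where
  "opnorm I L = (SUP g\<in>nonzero_L2 I. ratio I L g)"

definition uniform_sup ::
    "real set \<Rightarrow> real \<Rightarrow> (real \<Rightarrow> real) set \<Rightarrow> ((real \<Rightarrow> complex) \<Rightarrow> complex) \<Rightarrow> real" where
  "uniform_sup I \<sigma> \<Q> L = (SUP g\<in>{g\<in>L2 I. sigma_uniform I \<sigma> \<Q> g \<and> L2norm I g \<noteq> 0}. ratio I L g)"

definition exponential_sup :: "(real \<Rightarrow> real) set \<Rightarrow> ((real \<Rightarrow> complex) \<Rightarrow> complex) \<Rightarrow> real" where
  "exponential_sup \<Q> L = (SUP q\<in>\<Q>. cmod (L (expi q)))"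

lemma bounded_functional_zero:
  assumes "bounded_functional I L" and "g \<in> L2 I" and "L2norm I g = 0"
  shows "L g = 0"
  using assms unfolding bounded_functional_def by (metis mult_zero_right norm_le_zero_iff)

text \<open>Boundedness of \<open>L\<close> makes every set of ratios bounded above, so the suprema
  above are genuine least upper bounds.\<close>
lemma bdd_above_ratio:
  assumes "bounded_functional I L" and "S \<subseteq> nonzero_L2 I"
  shows "bdd_above (ratio I L ` S)"
proof -
  obtain A where A: "\<And>g. g \<in> L2 I \<Longrightarrow> cmod (L g) \<le> A * L2norm I g"
    using assms(1) unfolding bounded_functional_def by blast
  have "ratio I L g \<le> A" if "g \<in> S" for g
  proof -
    have "g \<in> L2 I" and "L2norm I g > 0"
      using that assms(2) L2norm_nonneg[of I g] by (auto simp: nonzero_L2_def)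
    then show ?thesis
      using A[of g] by (simp add: ratio_def divide_le_eq mult.commute)
  qed
  then show ?thesis
    by (rule bdd_aboveI2)
qed

lemma opnorm_bound:
  assumes "bounded_functional I L" and "g \<in> L2 I"
  shows "cmod (L g) \<le> opnorm I L * L2norm I g"
proof (cases "L2norm I g = 0")
  case True
  then show ?thesis
    using bounded_functional_zero[OF assms] by simp
next
  case False
  then have "g \<in> nonzero_L2 I"
    using assms(2) by (simp add: nonzero_L2_def)
  then have "ratio I L g \<le> opnorm I L"
    unfolding opnorm_def using bdd_above_ratio[OF assms(1) order_refl] by (rule cSUP_upper)
  then show ?thesis
    using False L2norm_nonneg[of I g] by (simp add: ratio_def divide_le_eq)
qed

lemma exponential_sup_upper:
  assumes "bounded_functional I L" and "I \<in> lmeasurable"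
    and "\<Q> \<subseteq> borel_measurable (lebesgue_on I)" and "q \<in> \<Q>"
  shows "cmod (L (expi q)) \<le> exponential_sup \<Q> L"
proof -
  have "cmod (L (expi p)) \<le> opnorm I L * sqrt (measure lebesgue I)" if "p \<in> \<Q>" for p
    using opnorm_bound[OF assms(1) expi_in_L2[OF assms(2) subsetD[OF assms(3) that]]]
      L2norm_expi[OF fmeasurableD[OF assms(2)]] by simp
  then have "bdd_above ((\<lambda>p. cmod (L (expi p))) ` \<Q>)"
    by (rule bdd_aboveI2)
  then show ?thesis
    unfolding exponential_sup_def using assms(4) by (rule cSUP_upper2) simp
qed

lemma ratio_dichotomy:
  assumes I: "I \<in> lmeasurable" and \<sigma>: "0 < \<sigma>"
    and \<Q>: "\<Q> \<subseteq> borel_measurable (lebesgue_on I)"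
    and sub: "sublinear_on (L2 I) L" and bdd: "bounded_functional I L"
    and gap: "opnorm I L * \<sigma> / 2 - exponential_sup \<Q> L > 0"
    and g: "g \<in> nonzero_L2 I"
  shows "ratio I L g \<le> max (uniform_sup I \<sigma> \<Q> L)
           (opnorm I L - \<sigma> * (opnorm I L * \<sigma> / 2 - exponential_sup \<Q> L) / measure lebesgue I)"
proof (cases "sigma_uniform I \<sigma> \<Q> g")
  case True
  have "bdd_above (ratio I L ` {g\<in>L2 I. sigma_uniform I \<sigma> \<Q> g \<and> L2norm I g \<noteq> 0})"
    by (rule bdd_above_ratio[OF bdd]) (auto simp: nonzero_L2_def)
  then have "ratio I L g \<le> uniform_sup I \<sigma> \<Q> L"
    unfolding uniform_sup_def using True g by (intro cSUP_upper) (auto simp: nonzero_L2_def)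
  then show ?thesis
    by simp
next
  case False
  then obtain q where q: "q \<in> \<Q>" and correlated:
    "cmod (LINT \<xi>|lebesgue_on I. g \<xi> * exp (- \<i> * complex_of_real (q \<xi>))) > \<sigma> * L2norm I g"
    unfolding sigma_uniform_def by (auto simp: not_le)
  have g_L2: "g \<in> L2 I" and g_pos: "L2norm I g > 0"
    using g L2norm_nonneg[of I g] by (auto simp: nonzero_L2_def)
  have "0 \<le> opnorm I L * L2norm I g"
    using opnorm_bound[OF bdd g_L2] norm_ge_zero order_trans by blast
  then have M_nonneg: "0 \<le> opnorm I L"
    using g_pos by (simp add: zero_le_mult_iff)
  have "ratio I L g
      \<le> opnorm I L - \<sigma> * (opnorm I L * \<sigma> / 2 - exponential_sup \<Q> L) / measure lebesgue I"
    using nonuniform_ratio_drop[OF I subsetD[OF \<Q> q] sub M_nonneg opnorm_bound[OF bdd]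
        exponential_sup_upper[OF bdd I \<Q> q] \<sigma> gap g_L2 g_pos correlated]
    by (simp add: ratio_def)
  then show ?thesis
    by simp
qed

text \<open>The supremum argument: if the operator norm \<open>M\<close> exceeded \<open>max U\<^sub>\<sigma> (2 Q / \<sigma>)\<close>,
  the dichotomy would bound every ratio, hence \<open>M\<close> itself, by a number below \<open>M\<close>.\<close>
lemma opnorm_le_max:
  assumes I: "I \<in> lmeasurable" and \<sigma>: "0 < \<sigma>"
    and \<Q>: "\<Q> \<subseteq> borel_measurable (lebesgue_on I)"
    and sub: "sublinear_on (L2 I) L" and bdd: "bounded_functional I L"
    and f: "f \<in> nonzero_L2 I"
  shows "opnorm I L \<le> max (uniform_sup I \<sigma> \<Q> L) (2 / \<sigma> * exponential_sup \<Q> L)"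
proof (rule ccontr)
  define M U Q where "M = opnorm I L" and "U = uniform_sup I \<sigma> \<Q> L" and "Q = exponential_sup \<Q> L"
  assume "\<not> opnorm I L \<le> max (uniform_sup I \<sigma> \<Q> L) (2 / \<sigma> * exponential_sup \<Q> L)"
  then have "U < M" and "2 / \<sigma> * Q < M"
    by (auto simp: M_def U_def Q_def)
  then have gap: "M * \<sigma> / 2 - Q > 0"
    using \<sigma> by (simp add: field_simps)
  define \<delta> where "\<delta> = \<sigma> * (M * \<sigma> / 2 - Q) / measure lebesgue I"
  have "\<delta> > 0"
    using f gap \<sigma> measure_pos_of_L2norm_pos[OF I, of f] L2norm_nonneg[of I f]
    by (simp add: \<delta>_def nonzero_L2_def)
  have "ratio I L g \<le> max U (M - \<delta>)" if "g \<in> nonzero_L2 I" for g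
    using ratio_dichotomy[OF I \<sigma> \<Q> sub bdd _ that] gap by (simp add: M_def U_def Q_def \<delta>_def)
  then have "M \<le> max U (M - \<delta>)"
    unfolding M_def opnorm_def using f by (intro cSUP_least) auto
  then show False
    using \<open>U < M\<close> \<open>\<delta> > 0\<close> by simp
qed

theorem theorem7p2:
  fixes I :: "real set" and \<sigma> :: real and \<Q> :: "(real \<Rightarrow> real) set"
    and L :: "(real \<Rightarrow> complex) \<Rightarrow> complex"
  assumes "is_interval I" and "bounded I"
    and "0 < \<sigma>" and "\<sigma> \<le> 1"
    and "\<Q> \<subseteq> borel_measurable (lebesgue_on I)"
    and "sublinear_on (L2 I) L" and "bounded_functional I L"
    and "f \<in> L2 I"
  shows "cmod (L f) \<le>
           max (SUP g\<in>{g\<in>L2 I. sigma_uniform I \<sigma> \<Q> g \<and> L2norm I g \<noteq> 0}. cmod (L g) / L2norm I g)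
               (2 / \<sigma> * (SUP q\<in>\<Q>. cmod (L (expi q)))) * L2norm I f"
proof -
  have I: "I \<in> lmeasurable"
    using measurable_convex[OF is_interval_convex[OF assms(1)] assms(2)] .
  define K where "K = max (uniform_sup I \<sigma> \<Q> L) (2 / \<sigma> * exponential_sup \<Q> L)"
  have "cmod (L f) \<le> K * L2norm I f"
  proof (cases "L2norm I f = 0")
    case True
    then show ?thesis
      using bounded_functional_zero[OF assms(7,8)] by simp
  next
    case False
    then have "opnorm I L \<le> K"
      unfolding K_def using assms(8) by (intro opnorm_le_max[OF I assms(3,5-7)]) (simp add: nonzero_L2_def)
    then have "opnorm I L * L2norm I f \<le> K * L2norm I f"
      using L2norm_nonneg[of I f] by (rule mult_right_mono)
    then show ?thesis
      using opnorm_bound[OF assms(7,8)] by simp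
  qed
  then show ?thesis
    unfolding K_def uniform_sup_def exponential_sup_def ratio_def .
qed

end
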